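(* Let $m\ge1$, let $g(t)=\varphi(t)h$ where $\varphi\in AC([0,1])$ is non-decreasing and non-negative and $h\in H^1(\Omega)$ is fixed, let $K_0\in\mathcal K_m^f(\overline\Omega)$, and let $K\colon[0,1]\to\mathcal K_m^f(\overline\Omega)$ satisfy conditions (a)–(e) below. Then $\mathcal E(g(t),K(t))\le\mathcal E(g(t),K(s))$ for $0\le s<t\le1$.
   Context: $\Omega\subset\mathbb R^2$ is a bounded connected open set with Lipschitz boundary; $\partial_N\Omega$ is a relatively open subset of $\partial\Omega$ with finitely many connected components, $\partial_D\Omega:=\partial\Omega\setminus\overline{\partial_N\Omega}$. $\mathcal K_m^f(\overline\Omega)$: compact subsets of $\overline\Omega$ with at most $m$ connected components and finite $\mathcal H^1$-measure. $L^{1,2}(A):=\{u\in L^2_{loc}(A):\nabla u\in L^2(A;\mathbb R^2)\}$ (quasi-continuous representatives; q.e. = up to $H^1$-capacity zero). $\mathcal E(g,K):=\min\{\int_{\Omega\setminus K}|\nabla v|^2dx+\mathcal H^1(K): v\in L^{1,2}(\Omega\setminus K),\ v=g\text{ q.e. on }\partial_D\Omega\setminus K\}$. Conditions: (a) $K_0\subset K(s)\subset K(t)$ for $0\le s\le t\le1$; (b) $\mathcal E(g(0),K(0))\le\mathcal E(g(0),K)$ for all $K\in\mathcal K_m^f(\overline\Omega)$, $K\supset K_0$; (c) for all $t\in[0,1]$, $\mathcal E(g(t),K(t))\le\mathcal E(g(t),K)$ for all $K\in\mathcal K_m^f(\overline\Omega)$, $K\supset K(t)$; (d) $t\mapsto\mathcal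 E(g(t),K(t))$ is absolutely continuous on $[0,1]$; (e) for a.e. $t$, $\frac{d}{ds}\mathcal E(g(t),K(s))|_{s=t}=0$. *)

theory Defs
  imports "HOL-Analysis.Analysis"
begin

type_synonym pt = "real^2"

definition H1_delta :: "real \<Rightarrow> pt set \<Rightarrow> ennreal" where
  "H1_delta \<delta> A = (INF C \<in> {C :: nat \<Rightarrow> pt set. A \<subseteq> (\<Union>i. C i) \<and>
        (\<forall>i. bounded (C i) \<and> diameter (C i) \<le> \<delta>)}. (\<Sum>i. ennreal (diameter (C i))))"

definition H1 :: "pt set \<Rightarrow> ennreal" where
  "H1 A = (SUP \<delta> \<in> {0<..}. H1_delta \<delta> A)"

coinductive smooth_fun :: "(pt \<Rightarrow> real) \<Rightarrow> bool" where
  "continuous_on UNIV f \<Longrightarrow>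
   (\<And>x. (f has_derivative (\<lambda>v. \<Sum>i\<in>UNIV. D i x * v $ i)) (at x)) \<Longrightarrow>
   (\<And>i. smooth_fun (D i)) \<Longrightarrow> smooth_fun f"

definition test_fun :: "pt set \<Rightarrow> (pt \<Rightarrow> real) \<Rightarrow> bool" where
  "test_fun A \<phi> \<longleftrightarrow> smooth_fun \<phi> \<and> compact (closure {x. \<phi> x \<noteq> 0})
      \<and> closure {x. \<phi> x \<noteq> 0} \<subseteq> A"

definition partial :: "2 \<Rightarrow> (pt \<Rightarrow> real) \<Rightarrow> pt \<Rightarrow> real" where
  "partial i \<phi> x = frechet_derivative \<phi> (at x) (axis i 1)"

definition weak_grad :: "pt set \<Rightarrow> (pt \<Rightarrow> real) \<Rightarrow> (pt \<Rightarrow> pt) \<Rightarrow> bool" where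
  "weak_grad A u G \<longleftrightarrow>
     (\<forall>C. compact C \<and> C \<subseteq> A \<longrightarrow> set_integrable lebesgue C u \<and>
          (\<forall>i. set_integrable lebesgue C (\<lambda>x. G x $ i))) \<and>
     (\<forall>\<phi>. test_fun A \<phi> \<longrightarrow> (\<forall>i.
        (LINT x:A|lebesgue. u x * partial i \<phi> x) = - (LINT x:A|lebesgue. G x $ i * \<phi> x)))"

definition L2_on :: "pt set \<Rightarrow> (pt \<Rightarrow> real) \<Rightarrow> bool" where
  "L2_on A u \<longleftrightarrow> set_borel_measurable lebesgue A u \<and> set_integrable lebesgue A (\<lambda>x. (u x)\<^sup>2)"

definition L2v_on :: "pt set \<Rightarrow> (pt \<Rightarrow> pt) \<Rightarrow> bool" where
  "L2v_on A G \<longleftrightarrow> set_borel_measurable lebesgue A G \<and> set_integrable lebesgue A (\<lambda>x. (norm (G x))\<^sup>2)"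

definition L2loc_on :: "pt set \<Rightarrow> (pt \<Rightarrow> real) \<Rightarrow> bool" where
  "L2loc_on A u \<longleftrightarrow> (\<forall>C. compact C \<and> C \<subseteq> A \<longrightarrow> L2_on C u)"

definition H1space :: "pt set \<Rightarrow> (pt \<Rightarrow> real) set" where
  "H1space A = {u. L2_on A u \<and> (\<exists>G. weak_grad A u G \<and> L2v_on A G)}"

definition cap :: "pt set \<Rightarrow> ennreal" where
  "cap E = (INF uG \<in> {(u, G). weak_grad UNIV u G \<and> L2_on UNIV u \<and> L2v_on UNIV G \<and>
        (\<exists>U. open U \<and> E \<subseteq> U \<and> (AE x in lebesgue. x \<in> U \<longrightarrow> 1 \<le> u x))}.
      ennreal (LINT x|lebesgue. (fst uG x)\<^sup>2 + (norm (snd uG x))\<^sup>2))"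

definition quasicont_on :: "pt set \<Rightarrow> (pt \<Rightarrow> real) \<Rightarrow> bool" where
  "quasicont_on S f \<longleftrightarrow> (\<forall>\<epsilon>>0. \<exists>U. open U \<and> cap U < ennreal \<epsilon> \<and> continuous_on (S - U) f)"

definition lipschitz_boundary :: "pt set \<Rightarrow> bool" where
  "lipschitz_boundary \<Omega> \<longleftrightarrow> (\<forall>x\<in>frontier \<Omega>. \<exists>r>0. \<exists>(A :: pt \<Rightarrow> pt) (f :: real \<Rightarrow> real) (L :: real).
     orthogonal_transformation A \<and> lipschitz_on L UNIV f \<and>
     \<Omega> \<inter> ball x r = {y \<in> ball x r. f ((A (y - x)) $ 1) < (A (y - x)) $ 2})"

definition Dir_bdry :: "pt set \<Rightarrow> pt set \<Rightarrow> pt set" where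
  "Dir_bdry \<Omega> N = frontier \<Omega> - closure N"

definition Kmf :: "nat \<Rightarrow> pt set \<Rightarrow> pt set set" where
  "Kmf m \<Omega> = {K. compact K \<and> K \<subseteq> closure \<Omega> \<and> finite (components K) \<and>
                 card (components K) \<le> m \<and> H1 K < top}"

definition bc_qe :: "pt set \<Rightarrow> pt set \<Rightarrow> pt set \<Rightarrow> (pt \<Rightarrow> real) \<Rightarrow> (pt \<Rightarrow> real) \<Rightarrow> bool" where
  "bc_qe \<Omega> N K g v \<longleftrightarrow> (\<exists>vt gt.
      quasicont_on (closure \<Omega> - K) vt \<and> (AE x in lebesgue. x \<in> \<Omega> - K \<longrightarrow> vt x = v x) \<and>
      quasicont_on (closure \<Omega>) gt \<and> (AE x in lebesgue. x \<in> \<Omega> \<longrightarrow> gt x = g x) \<and>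
      cap {x \<in> Dir_bdry \<Omega> N - K. vt x \<noteq> gt x} = 0)"

definition energy :: "pt set \<Rightarrow> pt set \<Rightarrow> (pt \<Rightarrow> real) \<Rightarrow> pt set \<Rightarrow> ennreal" where
  "energy \<Omega> N g K = (INF vG \<in> {(v, G). L2loc_on (\<Omega> - K) v \<and> weak_grad (\<Omega> - K) v G \<and>
        L2v_on (\<Omega> - K) G \<and> bc_qe \<Omega> N K g v}.
      ennreal (LINT x:(\<Omega> - K)|lebesgue. (norm (snd vG x))\<^sup>2)) + H1 K"

definition abs_cont_on :: "real \<Rightarrow> real \<Rightarrow> (real \<Rightarrow> real) \<Rightarrow> bool" where
  "abs_cont_on a b f \<longleftrightarrow> (\<forall>\<epsilon>>0. \<exists>\<delta>>0. \<forall>I :: (real \<times> real) set.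
     finite I \<longrightarrow> (\<forall>(c,d)\<in>I. a \<le> c \<and> c \<le> d \<and> d \<le> b) \<longrightarrow>
     (\<forall>(c,d)\<in>I. \<forall>(c',d')\<in>I. (c,d) \<noteq> (c',d') \<longrightarrow> d \<le> c' \<or> d' \<le> c) \<longrightarrow>
     (\<Sum>(c,d)\<in>I. d - c) < \<delta> \<longrightarrow> (\<Sum>(c,d)\<in>I. \<bar>f d - f c\<bar>) < \<epsilon>)"

end

theory Submission
  imports Defs
begin

(* With g(t) = phi(t) h the energy splits as
     E(phi(x) h, K(sigma)) = phi(x)^2 D(sigma) + H(sigma),
   where D(sigma) is the Dirichlet energy with boundary datum h and crack K(sigma), which is
   nonincreasing in sigma because admissible pairs for a crack stay admissible for any larger
   closed crack, and H(sigma) = H1(K(sigma)).  For fixed s the function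
     F(sigma) = E(phi(sigma) h, K(sigma)) - D(s) phi(sigma)^2
   is absolutely continuous on [s, t].  At almost every x, condition (e) bounds the variation of
   sigma |-> E(phi(x) h, K(sigma)) near x, and the remaining cross terms of F(d) - F(c) have a sign
   because phi^2 increases while D decreases; so F(d) - F(c) <= eps (d - c) on small intervals
   [c, d] containing x.  A Cousin-lemma argument, in which the exceptional null set is covered by
   an open set of small measure and handled by absolute continuity, yields F(t) <= F(s), and this
   rearranges to E(g(t), K(t)) <= phi(t)^2 D(s) + H(s) = E(g(t), K(s)). *)

section \<open>Absolute continuity on an interval\<close>

definition nonoverlapping_subintervals :: "real \<Rightarrow> real \<Rightarrow> (real \<times> real) set \<Rightarrow> bool" where
  "nonoverlapping_subintervals a b I \<longleftrightarrow> finite I \<and> (\<forall>(c,d)\<in>I. a \<le> c \<and> c \<le> d \<and> d \<le> b) \<and>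
     (\<forall>(c,d)\<in>I. \<forall>(c',d')\<in>I. (c,d) \<noteq> (c',d') \<longrightarrow> d \<le> c' \<or> d' \<le> c)"

lemma abs_cont_on_iff:
  "abs_cont_on a b f \<longleftrightarrow> (\<forall>\<epsilon>>0. \<exists>\<delta>>0. \<forall>I. nonoverlapping_subintervals a b I \<longrightarrow>
     (\<Sum>(c,d)\<in>I. d - c) < \<delta> \<longrightarrow> (\<Sum>(c,d)\<in>I. \<bar>f d - f c\<bar>) < \<epsilon>)"
  unfolding abs_cont_on_def nonoverlapping_subintervals_def by (simp add: imp_conjL)

lemma abs_cont_onE:
  assumes "abs_cont_on a b f" "\<epsilon> > 0"
  obtains \<delta> where "\<delta> > 0" "\<And>I. nonoverlapping_subintervals a b I \<Longrightarrow> (\<Sum>(c,d)\<in>I. d - c) < \<delta> \<Longrightarrow>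
    (\<Sum>(c,d)\<in>I. \<bar>f d - f c\<bar>) < \<epsilon>"
  using assms that unfolding abs_cont_on_iff by metis

lemma abs_cont_onI:
  assumes "\<And>\<epsilon>. \<epsilon> > 0 \<Longrightarrow> \<exists>\<delta>>0. \<forall>I. nonoverlapping_subintervals a b I \<longrightarrow>
     (\<Sum>(c,d)\<in>I. d - c) < \<delta> \<longrightarrow> (\<Sum>(c,d)\<in>I. \<bar>f d - f c\<bar>) < \<epsilon>"
  shows "abs_cont_on a b f"
  using assms unfolding abs_cont_on_iff by blast

lemma abs_cont_on_subinterval:
  assumes "abs_cont_on a b f" "a \<le> a'" "b' \<le> b"
  shows "abs_cont_on a' b' f"
proof (rule abs_cont_onI)
  fix \<epsilon> :: real assume "\<epsilon> > 0"
  obtain \<delta> where "\<delta> > 0" and \<delta>: "\<And>I. nonoverlapping_subintervals a b I \<Longrightarrow>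
      (\<Sum>(c,d)\<in>I. d - c) < \<delta> \<Longrightarrow> (\<Sum>(c,d)\<in>I. \<bar>f d - f c\<bar>) < \<epsilon>"
    using abs_cont_onE[OF assms(1) \<open>\<epsilon> > 0\<close>] by blast
  have "nonoverlapping_subintervals a b I" if "nonoverlapping_subintervals a' b' I" for I
    using that assms(2,3) unfolding nonoverlapping_subintervals_def by fastforce
  with \<delta> \<open>\<delta> > 0\<close> show "\<exists>\<delta>>0. \<forall>I. nonoverlapping_subintervals a' b' I \<longrightarrow>
      (\<Sum>(c,d)\<in>I. d - c) < \<delta> \<longrightarrow> (\<Sum>(c,d)\<in>I. \<bar>f d - f c\<bar>) < \<epsilon>"
    by blast
qed

lemma abs_cont_on_add:
  assumes f: "abs_cont_on a b f" and g: "abs_cont_on a b g"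
  shows "abs_cont_on a b (\<lambda>x. f x + g x)"
proof (rule abs_cont_onI)
  fix \<epsilon> :: real assume "\<epsilon> > 0"
  then have "\<epsilon> / 2 > 0" by simp
  obtain \<delta>1 where "\<delta>1 > 0" and \<delta>1: "\<And>I. nonoverlapping_subintervals a b I \<Longrightarrow>
      (\<Sum>(c,d)\<in>I. d - c) < \<delta>1 \<Longrightarrow> (\<Sum>(c,d)\<in>I. \<bar>f d - f c\<bar>) < \<epsilon> / 2"
    using abs_cont_onE[OF f \<open>\<epsilon> / 2 > 0\<close>] by blast
  obtain \<delta>2 where "\<delta>2 > 0" and \<delta>2: "\<And>I. nonoverlapping_subintervals a b I \<Longrightarrow>
      (\<Sum>(c,d)\<in>I. d - c) < \<delta>2 \<Longrightarrow> (\<Sum>(c,d)\<in>I. \<bar>g d - g c\<bar>) < \<epsilon> / 2"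
    using abs_cont_onE[OF g \<open>\<epsilon> / 2 > 0\<close>] by blast
  show "\<exists>\<delta>>0. \<forall>I. nonoverlapping_subintervals a b I \<longrightarrow> (\<Sum>(c,d)\<in>I. d - c) < \<delta> \<longrightarrow>
      (\<Sum>(c,d)\<in>I. \<bar>(f d + g d) - (f c + g c)\<bar>) < \<epsilon>"
  proof (intro exI[of _ "min \<delta>1 \<delta>2"] conjI allI impI)
    fix I assume I: "nonoverlapping_subintervals a b I" "(\<Sum>(c,d)\<in>I. d - c) < min \<delta>1 \<delta>2"
    have "(\<Sum>(c,d)\<in>I. \<bar>(f d + g d) - (f c + g c)\<bar>) \<le> (\<Sum>(c,d)\<in>I. \<bar>f d - f c\<bar> + \<bar>g d - g c\<bar>)"
      by (intro sum_mono) auto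
    also have "\<dots> = (\<Sum>(c,d)\<in>I. \<bar>f d - f c\<bar>) + (\<Sum>(c,d)\<in>I. \<bar>g d - g c\<bar>)"
      by (simp add: sum.distrib case_prod_unfold)
    also have "\<dots> < \<epsilon>"
      using \<delta>1[OF I(1)] \<delta>2[OF I(1)] I(2) by simp
    finally show "(\<Sum>(c,d)\<in>I. \<bar>(f d + g d) - (f c + g c)\<bar>) < \<epsilon>" .
  qed (use \<open>\<delta>1 > 0\<close> \<open>\<delta>2 > 0\<close> in simp)
qed

lemma abs_cont_on_dominated:
  assumes f: "abs_cont_on a b f"
    and dom: "\<And>c d. a \<le> c \<Longrightarrow> c \<le> d \<Longrightarrow> d \<le> b \<Longrightarrow> \<bar>g d - g c\<bar> \<le> k * \<bar>f d - f c\<bar>"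
  shows "abs_cont_on a b g"
proof (rule abs_cont_onI)
  fix \<epsilon> :: real assume "\<epsilon> > 0"
  define k' where "k' = \<bar>k\<bar> + 1"
  have "k' > 0" unfolding k'_def by simp
  with \<open>\<epsilon> > 0\<close> have "\<epsilon> / k' > 0" by simp
  then obtain \<delta> where "\<delta> > 0" and \<delta>: "\<And>I. nonoverlapping_subintervals a b I \<Longrightarrow>
      (\<Sum>(c,d)\<in>I. d - c) < \<delta> \<Longrightarrow> (\<Sum>(c,d)\<in>I. \<bar>f d - f c\<bar>) < \<epsilon> / k'"
    using abs_cont_onE[OF f] by blast
  show "\<exists>\<delta>>0. \<forall>I. nonoverlapping_subintervals a b I \<longrightarrow> (\<Sum>(c,d)\<in>I. d - c) < \<delta> \<longrightarrow>
      (\<Sum>(c,d)\<in>I. \<bar>g d - g c\<bar>) < \<epsilon>"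
  proof (intro exI[of _ \<delta>] conjI allI impI)
    fix I assume I: "nonoverlapping_subintervals a b I" "(\<Sum>(c,d)\<in>I. d - c) < \<delta>"
    have "(\<Sum>(c,d)\<in>I. \<bar>g d - g c\<bar>) \<le> (\<Sum>(c,d)\<in>I. k' * \<bar>f d - f c\<bar>)"
    proof (intro sum_mono, clarify)
      fix c d assume "(c, d) \<in> I"
      then have "\<bar>g d - g c\<bar> \<le> k * \<bar>f d - f c\<bar>"
        using I(1) dom unfolding nonoverlapping_subintervals_def by blast
      also have "\<dots> \<le> k' * \<bar>f d - f c\<bar>"
        unfolding k'_def by (intro mult_right_mono) auto
      finally show "\<bar>g d - g c\<bar> \<le> k' * \<bar>f d - f c\<bar>" .
    qed
    also have "\<dots> = k' * (\<Sum>(c,d)\<in>I. \<bar>f d - f c\<bar>)"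
      by (simp add: sum_distrib_left case_prod_unfold)
    also have "\<dots> < \<epsilon>"
      using \<delta>[OF I] \<open>k' > 0\<close> by (simp add: field_simps)
    finally show "(\<Sum>(c,d)\<in>I. \<bar>g d - g c\<bar>) < \<epsilon>" .
  qed (rule \<open>\<delta> > 0\<close>)
qed

lemma abs_cont_on_power2:
  assumes f: "abs_cont_on a b f" and bound: "\<And>x. x \<in> {a..b} \<Longrightarrow> \<bar>f x\<bar> \<le> M"
  shows "abs_cont_on a b (\<lambda>x. (f x)\<^sup>2)"
proof (rule abs_cont_on_dominated[OF f])
  fix c d assume cd: "a \<le> c" "c \<le> d" "d \<le> b"
  have "\<bar>(f d)\<^sup>2 - (f c)\<^sup>2\<bar> = \<bar>f d + f c\<bar> * \<bar>f d - f c\<bar>"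
    by (simp add: power2_eq_square abs_mult[symmetric] algebra_simps)
  also have "\<dots> \<le> (2 * M) * \<bar>f d - f c\<bar>"
    using bound[of c] bound[of d] cd by (intro mult_right_mono) auto
  finally show "\<bar>(f d)\<^sup>2 - (f c)\<^sup>2\<bar> \<le> (2 * M) * \<bar>f d - f c\<bar>" .
qed

lemma inj_on_snd_tagged_partial_division_real:
  fixes p :: "(real \<times> real set) set"
  assumes p: "p tagged_partial_division_of S"
  shows "inj_on snd p"
proof (rule inj_onI, clarsimp)
  fix x y K assume xK: "(x, K) \<in> p" and yK: "(y, K) \<in> p"
  obtain c d where K: "K = {c..d}"
    using tagged_partial_division_ofD(4)[OF p xK] by auto
  show "x = y"
  proof (rule ccontr)
    assume "x \<noteq> y"
    then have "interior K = {}"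
      using tagged_partial_division_ofD(5)[OF p xK yK] by simp
    then have "d \<le> c" using K by simp
    moreover have "x \<in> K" "y \<in> K"
      using tagged_partial_division_ofD(2)[OF p] xK yK by auto
    ultimately show False using K \<open>x \<noteq> y\<close> by auto
  qed
qed

lemma null_sets_lebesgue_outer_open:
  assumes "N \<in> null_sets lebesgue" "e > 0"
  obtains T where "open T" "N \<subseteq> T" "T \<in> lmeasurable" "measure lebesgue T < e"
proof -
  obtain T where T: "open T" "N \<subseteq> T" "T - N \<in> lmeasurable" "emeasure lebesgue (T - N) < ennreal e"
    using sets_lebesgue_outer_open[of N e] assms by auto
  have "T = (T - N) \<union> N" using T(2) by blast
  moreover have "N \<in> lmeasurable"
    using assms(1) by (rule fmeasurableI_null_sets)
  ultimately have "T \<in> lmeasurable" "measure lebesgue T = measure lebesgue (T - N)"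
    using T(3) assms(1) by (metis fmeasurable.Un, metis fmeasurableD measure_Un_null_set)
  moreover have "measure lebesgue (T - N) < e"
    using T(3,4) assms(2) by (simp add: emeasure_eq_measure2 ennreal_less_iff)
  ultimately show ?thesis using that T(1,2) by simp
qed

lemma division_of_real_cell:
  fixes \<D> :: "real set set"
  assumes "\<D> division_of S" "K \<in> \<D>"
  shows "K = {Inf K..Sup K}" "Inf K \<le> Sup K" "measure lebesgue K = Sup K - Inf K"
proof -
  obtain c d where "K = {c..d}"
    using division_ofD(4)[OF assms] by auto
  moreover have "K \<noteq> {}" using division_ofD(3)[OF assms] .
  ultimately show "K = {Inf K..Sup K}" "Inf K \<le> Sup K" "measure lebesgue K = Sup K - Inf K"
    by auto
qed

lemma nonoverlapping_subintervals_division: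
  assumes \<D>: "\<D> division_of \<Union>\<D>" "\<Union>\<D> \<subseteq> {a..b}"
  shows "nonoverlapping_subintervals a b ((\<lambda>K. (Inf K, Sup K)) ` {K \<in> \<D>. Inf K < Sup K})"
  unfolding nonoverlapping_subintervals_def
proof (intro conjI)
  show "finite ((\<lambda>K. (Inf K, Sup K)) ` {K \<in> \<D>. Inf K < Sup K})"
    using division_ofD(1)[OF \<D>(1)] by simp
  show "\<forall>(c,d)\<in>(\<lambda>K. (Inf K, Sup K)) ` {K \<in> \<D>. Inf K < Sup K}. a \<le> c \<and> c \<le> d \<and> d \<le> b"
    using division_of_real_cell[OF \<D>(1)] \<D>(2) by fastforce
  have "Sup K \<le> Inf L \<or> Sup L \<le> Inf K"
    if KL: "K \<in> \<D>" "L \<in> \<D>" "K \<noteq> L" "Inf K < Sup K" "Inf L < Sup L" for K L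
  proof -
    have "interior K \<inter> interior L = {}"
      using division_ofD(5)[OF \<D>(1)] KL by blast
    then have "min (Sup K) (Sup L) \<le> max (Inf K) (Inf L)"
      using division_of_real_cell(1)[OF \<D>(1)] KL
      by (metis Int_greaterThanLessThan greaterThanLessThan_empty_iff interior_atLeastAtMost_real)
    then show ?thesis
      using KL by auto
  qed
  then show "\<forall>(c,d)\<in>(\<lambda>K. (Inf K, Sup K)) ` {K \<in> \<D>. Inf K < Sup K}.
      \<forall>(c',d')\<in>(\<lambda>K. (Inf K, Sup K)) ` {K \<in> \<D>. Inf K < Sup K}. (c,d) \<noteq> (c',d') \<longrightarrow> d \<le> c' \<or> d' \<le> c"
    by auto
qed

lemma sum_division_endpoints:
  fixes f :: "real \<Rightarrow> real \<Rightarrow> 'a::comm_monoid_add"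
  assumes \<D>: "\<D> division_of S" and diag: "\<And>c. f c c = 0"
  shows "(\<Sum>(c,d)\<in>(\<lambda>K. (Inf K, Sup K)) ` {K \<in> \<D>. Inf K < Sup K}. f c d) = (\<Sum>K\<in>\<D>. f (Inf K) (Sup K))"
proof -
  have "inj_on (\<lambda>K. (Inf K, Sup K)) \<D>"
    using division_of_real_cell(1)[OF \<D>] by (intro inj_onI) (metis prod.inject)
  then have "(\<Sum>(c,d)\<in>(\<lambda>K. (Inf K, Sup K)) ` {K \<in> \<D>. Inf K < Sup K}. f c d)
      = (\<Sum>K\<in>{K \<in> \<D>. Inf K < Sup K}. f (Inf K) (Sup K))"
    by (subst sum.reindex) (auto intro: inj_on_subset)
  also have "\<dots> = (\<Sum>K\<in>\<D>. f (Inf K) (Sup K))"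
    using division_of_real_cell(2)[OF \<D>] division_ofD(1)[OF \<D>] diag
    by (intro sum.mono_neutral_left) (auto simp: order.strict_iff_order)
  finally show ?thesis .
qed

lemma abs_cont_on_tagged_partial_division:
  assumes "abs_cont_on a b F" "\<epsilon> > 0"
  obtains \<delta> where "\<delta> > 0"
    "\<And>p. p tagged_partial_division_of {a..b} \<Longrightarrow> measure lebesgue (\<Union>(snd ` p)) < \<delta> \<Longrightarrow>
      (\<Sum>(x, K)\<in>p. F (Sup K) - F (Inf K)) < \<epsilon>"
proof -
  obtain \<delta> where "\<delta> > 0" and \<delta>: "\<And>I. nonoverlapping_subintervals a b I \<Longrightarrow>
      (\<Sum>(c,d)\<in>I. d - c) < \<delta> \<Longrightarrow> (\<Sum>(c,d)\<in>I. \<bar>F d - F c\<bar>) < \<epsilon>"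
    using abs_cont_onE[OF assms] by blast
  have "(\<Sum>(x, K)\<in>p. F (Sup K) - F (Inf K)) < \<epsilon>"
    if p: "p tagged_partial_division_of {a..b}" "measure lebesgue (\<Union>(snd ` p)) < \<delta>" for p
  proof -
    define I where "I = (\<lambda>K. (Inf K, Sup K)) ` {K \<in> snd ` p. Inf K < Sup K}"
    have \<D>: "snd ` p division_of \<Union>(snd ` p)" "\<Union>(snd ` p) \<subseteq> {a..b}"
      using partial_division_of_tagged_division[OF p(1)] tagged_partial_division_ofD(3)[OF p(1)]
      by fastforce+
    have "(\<Sum>(c,d)\<in>I. d - c) = (\<Sum>K\<in>snd ` p. measure lebesgue K)"
      unfolding I_def using division_of_real_cell(3)[OF \<D>(1)]
      by (subst sum_division_endpoints[OF \<D>(1)]) auto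
    also have "\<dots> = measure lebesgue (\<Union>(snd ` p))"
      using content_division[OF \<D>(1)] .
    finally have "(\<Sum>(c,d)\<in>I. \<bar>F d - F c\<bar>) < \<epsilon>"
      using \<delta>[OF nonoverlapping_subintervals_division[OF \<D>]] p(2) unfolding I_def by simp
    moreover have "(\<Sum>(x, K)\<in>p. F (Sup K) - F (Inf K)) \<le> (\<Sum>(c,d)\<in>I. \<bar>F d - F c\<bar>)"
      unfolding I_def sum_division_endpoints[OF \<D>(1), of "\<lambda>c d. \<bar>F d - F c\<bar>", simplified]
      using sum.reindex[OF inj_on_snd_tagged_partial_division_real[OF p(1)],
          of "\<lambda>K. \<bar>F (Sup K) - F (Inf K)\<bar>"]
      by (auto simp: case_prod_unfold intro: sum_mono)
    ultimately show ?thesis by linarith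
  qed
  with \<open>\<delta> > 0\<close> show ?thesis using that by blast
qed

lemma tagged_division_sum_increments_le:
  fixes F :: "real \<Rightarrow> real"
  assumes p: "p tagged_division_of {a..b}" and "a \<le> b" "\<epsilon> \<ge> 0" "q \<subseteq> p"
    and le: "\<And>x c d. (x, {c..d}) \<in> q \<Longrightarrow> c \<le> d \<Longrightarrow> F d - F c \<le> \<epsilon> * (d - c)"
  shows "(\<Sum>(x, K)\<in>q. F (Sup K) - F (Inf K)) \<le> \<epsilon> * (b - a)"
proof -
  have "finite p" using p by blast
  have "(\<Sum>(x, K)\<in>q. F (Sup K) - F (Inf K)) \<le> (\<Sum>(x, K)\<in>q. \<epsilon> * measure lborel K)"
  proof (intro sum_mono, clarify)
    fix x K assume xK: "(x, K) \<in> q"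
    then have "(x, K) \<in> p" using \<open>q \<subseteq> p\<close> by blast
    then have "x \<in> K" "\<exists>c d. K = cbox c d"
      using tagged_division_ofD(2,4)[OF p] by auto
    then obtain c d where "K = {c..d}" "x \<in> K" by auto
    then show "F (Sup K) - F (Inf K) \<le> \<epsilon> * measure lborel K"
      using le[of x c d] xK by auto
  qed
  also have "\<dots> \<le> (\<Sum>(x, K)\<in>p. \<epsilon> * measure lborel K)"
    using \<open>finite p\<close> \<open>\<epsilon> \<ge> 0\<close> \<open>q \<subseteq> p\<close> by (intro sum_mono2) auto
  also have "\<dots> = \<epsilon> * (b - a)"
    using additive_content_tagged_division[of p a b] p \<open>a \<le> b\<close>
    by (simp add: sum_distrib_left[symmetric] case_prod_unfold)
  finally show ?thesis .
qed

definition straddle_slope_le :: "real \<Rightarrow> real \<Rightarrow> (real \<Rightarrow> real) \<Rightarrow> real \<Rightarrow> real \<Rightarrow> bool" where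
  "straddle_slope_le a b F x \<epsilon> \<longleftrightarrow> (\<exists>r>0. \<forall>c d. a \<le> c \<longrightarrow> d \<le> b \<longrightarrow> x \<in> {c..d} \<longrightarrow>
     {c..d} \<subseteq> ball x r \<longrightarrow> F d - F c \<le> \<epsilon> * (d - c))"

lemma straddle_slope_gauge:
  assumes slope: "\<And>x. x \<in> {a..b} - N \<Longrightarrow> straddle_slope_le a b F x \<epsilon>" and T: "open T" "N \<subseteq> T"
  obtains \<gamma> where "gauge \<gamma>" "\<And>x. x \<in> N \<Longrightarrow> \<gamma> x = T"
    "\<And>x c d. x \<in> {a..b} - N \<Longrightarrow> a \<le> c \<Longrightarrow> d \<le> b \<Longrightarrow> x \<in> {c..d} \<Longrightarrow> {c..d} \<subseteq> \<gamma> x \<Longrightarrow>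
      F d - F c \<le> \<epsilon> * (d - c)"
proof -
  have "\<forall>x. \<exists>r>0. x \<in> {a..b} - N \<longrightarrow> (\<forall>c d. a \<le> c \<longrightarrow> d \<le> b \<longrightarrow> x \<in> {c..d} \<longrightarrow>
      {c..d} \<subseteq> ball x r \<longrightarrow> F d - F c \<le> \<epsilon> * (d - c))"
    using slope unfolding straddle_slope_le_def by (metis zero_less_one)
  then obtain R where R: "\<And>x. R x > 0"
    and R_slope: "\<And>x c d. x \<in> {a..b} - N \<Longrightarrow> a \<le> c \<Longrightarrow> d \<le> b \<Longrightarrow> x \<in> {c..d} \<Longrightarrow>
      {c..d} \<subseteq> ball x (R x) \<Longrightarrow> F d - F c \<le> \<epsilon> * (d - c)"
    by metis
  show thesis
  proof (rule that[of "\<lambda>x. if x \<in> N then T else ball x (R x)"])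
    show "gauge (\<lambda>x. if x \<in> N then T else ball x (R x))"
      unfolding gauge_def using T R by auto
  qed (use R_slope in auto)
qed

lemma abs_cont_on_increment_le:
  fixes F :: "real \<Rightarrow> real"
  assumes ac: "abs_cont_on a b F" and "a \<le> b" and N: "N \<in> null_sets lebesgue" and "\<epsilon> > 0"
    and slope: "\<And>x. x \<in> {a..b} - N \<Longrightarrow> straddle_slope_le a b F x \<epsilon>"
  shows "F b - F a \<le> \<epsilon> * (b - a) + \<epsilon>"
proof -
  obtain \<delta> where "\<delta> > 0" and \<delta>: "\<And>p. p tagged_partial_division_of {a..b} \<Longrightarrow>
      measure lebesgue (\<Union>(snd ` p)) < \<delta> \<Longrightarrow> (\<Sum>(x, K)\<in>p. F (Sup K) - F (Inf K)) < \<epsilon>"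
    using abs_cont_on_tagged_partial_division[OF ac \<open>\<epsilon> > 0\<close>] by blast
  obtain T where T: "open T" "N \<subseteq> T" "T \<in> lmeasurable" "measure lebesgue T < \<delta>"
    using null_sets_lebesgue_outer_open[OF N \<open>\<delta> > 0\<close>] by blast
  \<comment> \<open>Cells tagged in N lie in T and are controlled by absolute continuity, all others by the slope bound.\<close>
  obtain \<gamma> where "gauge \<gamma>" and \<gamma>_N: "\<And>x. x \<in> N \<Longrightarrow> \<gamma> x = T"
    and \<gamma>_slope: "\<And>x c d. x \<in> {a..b} - N \<Longrightarrow> a \<le> c \<Longrightarrow> d \<le> b \<Longrightarrow> x \<in> {c..d} \<Longrightarrow>
      {c..d} \<subseteq> \<gamma> x \<Longrightarrow> F d - F c \<le> \<epsilon> * (d - c)"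
    using straddle_slope_gauge[OF slope T(1,2)] by blast
  then obtain p where p: "p tagged_division_of {a..b}" "\<gamma> fine p"
    using fine_division_exists_real by blast
  define p1 where "p1 = {(x, K) \<in> p. x \<notin> N}"
  have "(\<Sum>(x, K)\<in>p1. F (Sup K) - F (Inf K)) \<le> \<epsilon> * (b - a)"
  proof (rule tagged_division_sum_increments_le[OF p(1) \<open>a \<le> b\<close>])
    fix x c d assume "(x, {c..d}) \<in> p1"
    then have xcd: "(x, {c..d}) \<in> p" "x \<notin> N" unfolding p1_def by auto
    then show "F d - F c \<le> \<epsilon> * (d - c)"
      using tagged_division_ofD(2,3)[OF p(1) xcd(1)] p(2) unfolding fine_def
      by (intro \<gamma>_slope) auto
  qed (use \<open>\<epsilon> > 0\<close> in \<open>auto simp: p1_def\<close>)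
  moreover have "(\<Sum>(x, K)\<in>p - p1. F (Sup K) - F (Inf K)) < \<epsilon>"
  proof (rule \<delta>)
    show p2: "p - p1 tagged_partial_division_of {a..b}"
      using p(1) unfolding tagged_division_of_def by (auto intro: tagged_partial_division_subset)
    have "K \<subseteq> T" if "(x, K) \<in> p - p1" for x K
    proof -
      have "K \<subseteq> \<gamma> x" "x \<in> N"
        using that p(2) unfolding p1_def fine_def by auto
      then show ?thesis using \<gamma>_N by simp
    qed
    then have "\<Union>(snd ` (p - p1)) \<subseteq> T" by fastforce
    then have "measure lebesgue (\<Union>(snd ` (p - p1))) \<le> measure lebesgue T"
      using lmeasurable_division[OF partial_division_of_tagged_division[OF p2]] T(3)
      by (intro measure_mono_fmeasurable) auto
    with T(4) show "measure lebesgue (\<Union>(snd ` (p - p1))) < \<delta>" by simp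
  qed
  moreover have "F b - F a = (\<Sum>(x, K)\<in>p - p1. F (Sup K) - F (Inf K)) + (\<Sum>(x, K)\<in>p1. F (Sup K) - F (Inf K))"
  proof -
    have "p1 \<subseteq> p" "finite p" using p(1) unfolding p1_def by auto
    then show ?thesis
      using additive_tagged_division_1[OF \<open>a \<le> b\<close> p(1), of F]
        sum.subset_diff[of p1 p "\<lambda>(x, K). F (Sup K) - F (Inf K)"] by simp
  qed
  ultimately show ?thesis by linarith
qed

lemma abs_cont_on_nonincreasing:
  fixes F :: "real \<Rightarrow> real"
  assumes ac: "abs_cont_on a b F" and "a \<le> b" and N: "N \<in> null_sets lebesgue"
    and slope: "\<And>x \<epsilon>. x \<in> {a..b} - N \<Longrightarrow> \<epsilon> > 0 \<Longrightarrow> straddle_slope_le a b F x \<epsilon>"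
  shows "F b \<le> F a"
proof (rule field_le_epsilon)
  fix e :: real assume "e > 0"
  define \<epsilon> where "\<epsilon> = e / (b - a + 1)"
  have "\<epsilon> > 0" unfolding \<epsilon>_def using \<open>e > 0\<close> \<open>a \<le> b\<close> by simp
  have "F b - F a \<le> \<epsilon> * (b - a) + \<epsilon>"
    using abs_cont_on_increment_le[OF ac \<open>a \<le> b\<close> N \<open>\<epsilon> > 0\<close>] slope \<open>\<epsilon> > 0\<close> by blast
  also have "\<dots> = \<epsilon> * (b - a + 1)"
    by (simp add: algebra_simps)
  also have "\<dots> = e"
    unfolding \<epsilon>_def using \<open>a \<le> b\<close> by simp
  finally show "F b \<le> F a + e" by simp
qed

lemma has_real_derivative_zero_withinE:
  assumes "(f has_real_derivative 0) (at x within S)" "\<epsilon> > 0"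
  obtains r where "r > 0" "\<And>y. y \<in> S \<Longrightarrow> \<bar>y - x\<bar> < r \<Longrightarrow> \<bar>f y - f x\<bar> \<le> \<epsilon> * \<bar>y - x\<bar>"
  using assms unfolding has_field_derivative_def has_derivative_within_alt by force

lemma separable_energy_stationary_le:
  fixes p D H :: "real \<Rightarrow> real" and E :: "real \<Rightarrow> real \<Rightarrow> real"
  assumes "s \<le> t"
    and E: "\<And>x \<sigma>. x \<in> {s..t} \<Longrightarrow> \<sigma> \<in> {s..t} \<Longrightarrow> E x \<sigma> = p x * D \<sigma> + H \<sigma>"
    and p: "mono_on {s..t} p" and D: "antimono_on {s..t} D"
    and ac_E: "abs_cont_on s t (\<lambda>\<sigma>. E \<sigma> \<sigma>)" and ac_p: "abs_cont_on s t p"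
    and N: "N \<in> null_sets lebesgue"
    and stationary: "\<And>x. x \<in> {s..t} - N \<Longrightarrow> ((\<lambda>\<sigma>. E x \<sigma>) has_real_derivative 0) (at x within {s..t})"
  shows "E t t \<le> E t s"
proof -
  define F where "F \<sigma> = E \<sigma> \<sigma> - D s * p \<sigma>" for \<sigma>
  have ac_Dp: "abs_cont_on s t (\<lambda>\<sigma>. - D s * p \<sigma>)"
    by (rule abs_cont_on_dominated[OF ac_p, of _ "\<bar>D s\<bar>"]) (simp add: abs_mult[symmetric] algebra_simps)
  have ac_F: "abs_cont_on s t F"
    unfolding F_def using abs_cont_on_add[OF ac_E ac_Dp] by simp
  have "straddle_slope_le s t F x \<epsilon>" if x: "x \<in> {s..t} - N" and "\<epsilon> > 0" for x \<epsilon>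
  proof -
    obtain r where "r > 0"
      and r: "\<And>y. y \<in> {s..t} \<Longrightarrow> \<bar>y - x\<bar> < r \<Longrightarrow> \<bar>E x y - E x x\<bar> \<le> \<epsilon> * \<bar>y - x\<bar>"
      using has_real_derivative_zero_withinE[OF stationary[OF x] \<open>\<epsilon> > 0\<close>] by blast
    have "F d - F c \<le> \<epsilon> * (d - c)"
      if cd: "s \<le> c" "d \<le> t" "x \<in> {c..d}" "{c..d} \<subseteq> ball x r" for c d
    proof -
      have in_st: "c \<in> {s..t}" "d \<in> {s..t}" "x \<in> {s..t}" using cd x by auto
      have "c \<in> {c..d}" "d \<in> {c..d}" using cd(3) by auto
      then have "c \<in> ball x r" "d \<in> ball x r" using cd(4) by blast+
      then have "\<bar>c - x\<bar> < r" "\<bar>d - x\<bar> < r" by (auto simp: dist_real_def)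
      then have right: "E x d - E x x \<le> \<epsilon> * (d - x)" and left: "E x x - E x c \<le> \<epsilon> * (x - c)"
        using r[of d] r[of c] in_st cd by auto
      have "(p d - p x) * (D d - D s) \<le> 0" "(p x - p c) * (D c - D s) \<le> 0"
        using mono_onD[OF p] monotone_onD[OF D] in_st cd \<open>s \<le> t\<close>
        by (auto intro!: mult_nonneg_nonpos)
      moreover have "F d - F c = (E x d - E x x) + (E x x - E x c)
          + (p d - p x) * (D d - D s) + (p x - p c) * (D c - D s)"
        unfolding F_def using E in_st by (simp add: algebra_simps)
      ultimately show ?thesis using left right by (simp add: algebra_simps)
    qed
    with \<open>r > 0\<close> show ?thesis unfolding straddle_slope_le_def by blast
  qed
  then have "F t \<le> F s"
    using abs_cont_on_nonincreasing[OF ac_F \<open>s \<le> t\<close> N] by blast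
  then show ?thesis
    unfolding F_def using E \<open>s \<le> t\<close> by (simp add: algebra_simps)
qed

section \<open>The Dirichlet part of the energy\<close>

definition admissible :: "pt set \<Rightarrow> pt set \<Rightarrow> (pt \<Rightarrow> real) \<Rightarrow> pt set \<Rightarrow> ((pt \<Rightarrow> real) \<times> (pt \<Rightarrow> pt)) set"
  where "admissible \<Omega> N g K = {(v, G). L2loc_on (\<Omega> - K) v \<and> weak_grad (\<Omega> - K) v G \<and>
          L2v_on (\<Omega> - K) G \<and> bc_qe \<Omega> N K g v}"

definition dirichlet :: "pt set \<Rightarrow> pt set \<Rightarrow> (pt \<Rightarrow> real) \<Rightarrow> pt set \<Rightarrow> ennreal"
  where "dirichlet \<Omega> N g K = (INF vG\<in>admissible \<Omega> N g K.
          ennreal (LINT x:(\<Omega> - K)|lebesgue. (norm (snd vG x))\<^sup>2))"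

lemma energy_eq_dirichlet_plus_H1: "energy \<Omega> N g K = dirichlet \<Omega> N g K + H1 K"
  unfolding energy_def dirichlet_def admissible_def ..

lemma L2_on_cmult:
  assumes "L2_on A u"
  shows "L2_on A (\<lambda>x. c * u x)"
proof -
  have "(\<lambda>x. c * (indicator A x *\<^sub>R u x)) \<in> borel_measurable lebesgue"
    "set_integrable lebesgue A (\<lambda>x. c\<^sup>2 * (u x)\<^sup>2)"
    using assms unfolding L2_on_def set_borel_measurable_def by auto
  then show ?thesis
    unfolding L2_on_def set_borel_measurable_def by (simp add: power_mult_distrib mult.left_commute)
qed

lemma L2loc_on_cmult: "L2loc_on A u \<Longrightarrow> L2loc_on A (\<lambda>x. c * u x)"
  unfolding L2loc_on_def using L2_on_cmult by blast

lemma L2v_on_scaleR: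
  assumes "L2v_on A G"
  shows "L2v_on A (\<lambda>x. c *\<^sub>R G x)"
proof -
  have "(\<lambda>x. indicator A x *\<^sub>R G x) \<in> borel_measurable lebesgue"
    using assms unfolding L2v_on_def set_borel_measurable_def by auto
  then have "(\<lambda>x. c *\<^sub>R (indicator A x *\<^sub>R G x)) \<in> borel_measurable lebesgue"
    by (rule borel_measurable_scaleR[OF borel_measurable_const])
  moreover have "(\<lambda>x. indicator A x *\<^sub>R (c *\<^sub>R G x)) = (\<lambda>x. c *\<^sub>R (indicator A x *\<^sub>R G x))"
    by auto
  moreover have "set_integrable lebesgue A (\<lambda>x. c\<^sup>2 * (norm (G x))\<^sup>2)"
    using assms unfolding L2v_on_def by auto
  ultimately show ?thesis
    unfolding L2v_on_def set_borel_measurable_def by (simp only:) (simp add: power_mult_distrib)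
qed

lemma weak_grad_cmult: "weak_grad A u G \<Longrightarrow> weak_grad A (\<lambda>x. c * u x) (\<lambda>x. c *\<^sub>R G x)"
  unfolding weak_grad_def by (auto simp: mult.assoc)

lemma quasicont_on_cmult: "quasicont_on S f \<Longrightarrow> quasicont_on S (\<lambda>x. c * f x)"
  unfolding quasicont_on_def by (metis continuous_on_mult_left)

lemma bc_qe_cmult:
  assumes "bc_qe \<Omega> N K g v" "c \<noteq> 0"
  shows "bc_qe \<Omega> N K (\<lambda>x. c * g x) (\<lambda>x. c * v x)"
proof -
  obtain vt gt where "quasicont_on (closure \<Omega> - K) vt" "AE x in lebesgue. x \<in> \<Omega> - K \<longrightarrow> vt x = v x"
      "quasicont_on (closure \<Omega>) gt" "AE x in lebesgue. x \<in> \<Omega> \<longrightarrow> gt x = g x"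
      "cap {x \<in> Dir_bdry \<Omega> N - K. vt x \<noteq> gt x} = 0"
    using assms(1) unfolding bc_qe_def by blast
  then show ?thesis
    unfolding bc_qe_def using assms(2)
    by (intro exI[of _ "\<lambda>x. c * vt x"] exI[of _ "\<lambda>x. c * gt x"])
      (auto simp: quasicont_on_cmult elim!: eventually_mono)
qed

lemma admissible_cmult:
  assumes "(v, G) \<in> admissible \<Omega> N g K" "c \<noteq> 0"
  shows "((\<lambda>x. c * v x), (\<lambda>x. c *\<^sub>R G x)) \<in> admissible \<Omega> N (\<lambda>x. c * g x) K"
  using assms unfolding admissible_def
  by (auto simp: L2loc_on_cmult weak_grad_cmult L2v_on_scaleR bc_qe_cmult)

lemma cap_empty: "cap {} = 0"
proof -
  have "((\<lambda>x. 0), (\<lambda>x. 0)) \<in> {(u, G). weak_grad UNIV u G \<and> L2_on UNIV u \<and> L2v_on UNIV G \<and>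
        (\<exists>U. open U \<and> {} \<subseteq> U \<and> (AE x in lebesgue. x \<in> U \<longrightarrow> 1 \<le> u x))}"
    unfolding weak_grad_def L2_on_def L2v_on_def set_borel_measurable_def
    by (auto intro!: exI[of _ "{}"])
  from INF_lower[OF this, of "\<lambda>uG. ennreal (LINT x|lebesgue. (fst uG x)\<^sup>2 + (norm (snd uG x))\<^sup>2)"]
  show ?thesis unfolding cap_def by simp
qed

lemma zero_admissible: "((\<lambda>x. 0), (\<lambda>x. 0)) \<in> admissible \<Omega> N (\<lambda>x. 0) K"
proof -
  have "quasicont_on S (\<lambda>x. 0)" for S
    unfolding quasicont_on_def using cap_empty by (auto intro!: exI[of _ "{}"])
  then have "bc_qe \<Omega> N K (\<lambda>x. 0) (\<lambda>x. 0)"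
    unfolding bc_qe_def using cap_empty by (intro exI[of _ "\<lambda>x. 0"]) auto
  then show ?thesis
    unfolding admissible_def L2loc_on_def L2_on_def L2v_on_def weak_grad_def set_borel_measurable_def
    by simp
qed

lemma ennreal_mult_INF:
  fixes k :: ennreal
  assumes "k \<noteq> 0" "k \<noteq> top"
  shows "k * (INF i\<in>A. f i) = (INF i\<in>A. k * f i)"
proof (rule antisym)
  show "k * (INF i\<in>A. f i) \<le> (INF i\<in>A. k * f i)"
    by (intro INF_greatest mult_left_mono INF_lower) auto
  have cancel: "inverse k * (k * x) = x" for x :: ennreal
    using assms by (metis divide_ennreal_def mult.commute mult_divide_eq_ennreal)
  have "inverse k * (INF i\<in>A. k * f i) \<le> (INF i\<in>A. f i)"
    by (rule INF_greatest) (metis INF_lower cancel mult_left_mono zero_le)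
  then have "k * (inverse k * (INF i\<in>A. k * f i)) \<le> k * (INF i\<in>A. f i)"
    by (rule mult_left_mono) simp
  moreover have "k * (inverse k * x) = x" for x :: ennreal
    using cancel[of x] by (simp add: ac_simps)
  ultimately show "(INF i\<in>A. k * f i) \<le> k * (INF i\<in>A. f i)"
    by simp
qed

lemma dirichlet_cmult_le:
  assumes "c \<noteq> 0"
  shows "dirichlet \<Omega> N (\<lambda>x. c * g x) K \<le> ennreal (c\<^sup>2) * dirichlet \<Omega> N g K"
proof -
  have "dirichlet \<Omega> N (\<lambda>x. c * g x) K \<le> ennreal (c\<^sup>2) * ennreal (LINT x:(\<Omega> - K)|lebesgue. (norm (G x))\<^sup>2)"
    if "(v, G) \<in> admissible \<Omega> N g K" for v G
  proof -
    have "dirichlet \<Omega> N (\<lambda>x. c * g x) K \<le> ennreal (LINT x:(\<Omega> - K)|lebesgue. (norm (c *\<^sub>R G x))\<^sup>2)"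
      unfolding dirichlet_def using admissible_cmult[OF that assms] by (force intro: INF_lower2)
    moreover have "(LINT x:(\<Omega> - K)|lebesgue. (norm (G x))\<^sup>2) \<ge> 0"
      unfolding set_lebesgue_integral_def by (intro Bochner_Integration.integral_nonneg_AE AE_I2) simp
    ultimately show ?thesis
      by (simp add: power_mult_distrib ennreal_mult)
  qed
  then have "dirichlet \<Omega> N (\<lambda>x. c * g x) K \<le> (INF vG\<in>admissible \<Omega> N g K.
      ennreal (c\<^sup>2) * ennreal (LINT x:(\<Omega> - K)|lebesgue. (norm (snd vG x))\<^sup>2))"
    by (intro INF_greatest) auto
  also have "\<dots> = ennreal (c\<^sup>2) * dirichlet \<Omega> N g K"
    unfolding dirichlet_def using assms by (simp add: ennreal_mult_INF)
  finally show ?thesis .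
qed

lemma dirichlet_cmult: "dirichlet \<Omega> N (\<lambda>x. c * g x) K = ennreal (c\<^sup>2) * dirichlet \<Omega> N g K"
proof (cases "c = 0")
  case True
  have "dirichlet \<Omega> N (\<lambda>x. 0) K = 0"
    using INF_lower[OF zero_admissible, of "\<lambda>vG. ennreal (LINT x:(\<Omega> - K)|lebesgue. (norm (snd vG x))\<^sup>2)"]
    unfolding dirichlet_def by simp
  with True show ?thesis by simp
next
  case False
  have "ennreal (c\<^sup>2) * dirichlet \<Omega> N g K
      = ennreal (c\<^sup>2) * dirichlet \<Omega> N (\<lambda>x. (1 / c) * (c * g x)) K"
    using False by simp
  also have "\<dots> \<le> ennreal (c\<^sup>2) * (ennreal ((1 / c)\<^sup>2) * dirichlet \<Omega> N (\<lambda>x. c * g x) K)"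
    using False by (intro mult_left_mono dirichlet_cmult_le) auto
  also have "\<dots> = dirichlet \<Omega> N (\<lambda>x. c * g x) K"
    using False by (simp add: mult.assoc[symmetric] ennreal_mult[symmetric] power_divide)
  finally show ?thesis
    using dirichlet_cmult_le[OF False] by (rule antisym[rotated])
qed

lemma partial_eq_0_outside_support:
  assumes "x \<notin> closure {y. \<phi> y \<noteq> 0}"
  shows "partial i \<phi> x = 0"
proof -
  have "((\<lambda>y. 0) has_derivative (\<lambda>v. 0)) (at x)" by simp
  then have "(\<phi> has_derivative (\<lambda>v. 0)) (at x)"
    by (rule has_derivative_transform_within_open[of _ _ _ _ "- closure {y. \<phi> y \<noteq> 0}"])
      (use assms closure_subset[of "{y. \<phi> y \<noteq> 0}"] in force)+
  then show ?thesis
    unfolding partial_def using frechet_derivative_at by metis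
qed

lemma weak_grad_subset:
  assumes "weak_grad A u G" "B \<subseteq> A"
  shows "weak_grad B u G"
  unfolding weak_grad_def
proof (intro conjI allI impI)
  fix C assume "compact C \<and> C \<subseteq> B"
  with assms show "set_integrable lebesgue C u" "set_integrable lebesgue C (\<lambda>x. G x $ i)" for i
    unfolding weak_grad_def by auto
next
  fix \<phi> i assume \<phi>: "test_fun B \<phi>"
  then have "test_fun A \<phi>" and supp: "closure {y. \<phi> y \<noteq> 0} \<subseteq> B"
    using assms(2) unfolding test_fun_def by auto
  then have "(LINT x:A|lebesgue. u x * partial i \<phi> x) = - (LINT x:A|lebesgue. G x $ i * \<phi> x)"
    using assms(1) unfolding weak_grad_def by blast
  moreover have "\<phi> x = 0" "partial i \<phi> x = 0" if "x \<in> A - B" for x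
    using that supp closure_subset[of "{y. \<phi> y \<noteq> 0}"] partial_eq_0_outside_support[of x \<phi> i] by auto
  then have "(LINT x:A|lebesgue. u x * partial i \<phi> x) = (LINT x:B|lebesgue. u x * partial i \<phi> x)"
    "(LINT x:A|lebesgue. G x $ i * \<phi> x) = (LINT x:B|lebesgue. G x $ i * \<phi> x)"
    unfolding set_lebesgue_integral_def using assms(2)
    by (auto intro!: Bochner_Integration.integral_cong split: split_indicator)
  ultimately show "(LINT x:B|lebesgue. u x * partial i \<phi> x) = - (LINT x:B|lebesgue. G x $ i * \<phi> x)"
    by simp
qed

lemma L2v_on_subset:
  assumes "L2v_on A G" "B \<in> sets lebesgue" "B \<subseteq> A"
  shows "L2v_on B G"
  using assms set_borel_measurable_subset set_integrable_subset unfolding L2v_on_def by metis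

lemma L2loc_on_subset: "L2loc_on A u \<Longrightarrow> B \<subseteq> A \<Longrightarrow> L2loc_on B u"
  unfolding L2loc_on_def by blast

lemma cap_mono: "E \<subseteq> E' \<Longrightarrow> cap E \<le> cap E'"
  unfolding cap_def by (rule INF_superset_mono) auto

lemma quasicont_on_subset: "quasicont_on S f \<Longrightarrow> S' \<subseteq> S \<Longrightarrow> quasicont_on S' f"
  unfolding quasicont_on_def by (meson Diff_mono continuous_on_subset order_refl)

lemma bc_qe_mono:
  assumes "bc_qe \<Omega> N K g v" "K \<subseteq> K'"
  shows "bc_qe \<Omega> N K' g v"
proof -
  obtain vt gt where vt: "quasicont_on (closure \<Omega> - K) vt" "AE x in lebesgue. x \<in> \<Omega> - K \<longrightarrow> vt x = v x"
      and gt: "quasicont_on (closure \<Omega>) gt" "AE x in lebesgue. x \<in> \<Omega> \<longrightarrow> gt x = g x"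
      and cap0: "cap {x \<in> Dir_bdry \<Omega> N - K. vt x \<noteq> gt x} = 0"
    using assms(1) unfolding bc_qe_def by blast
  have "quasicont_on (closure \<Omega> - K') vt"
    using quasicont_on_subset[OF vt(1)] assms(2) by blast
  moreover have "AE x in lebesgue. x \<in> \<Omega> - K' \<longrightarrow> vt x = v x"
    using vt(2) by (rule eventually_mono) (use assms(2) in blast)
  moreover have "cap {x \<in> Dir_bdry \<Omega> N - K'. vt x \<noteq> gt x} = 0"
  proof -
    have "{x \<in> Dir_bdry \<Omega> N - K'. vt x \<noteq> gt x} \<subseteq> {x \<in> Dir_bdry \<Omega> N - K. vt x \<noteq> gt x}"
      using assms(2) by blast
    from cap_mono[OF this] show ?thesis using cap0 by simp
  qed
  ultimately show ?thesis
    unfolding bc_qe_def using gt by blast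
qed

lemma admissible_mono:
  assumes "open \<Omega>" "closed K'" "K \<subseteq> K'"
  shows "admissible \<Omega> N g K \<subseteq> admissible \<Omega> N g K'"
proof -
  have sub: "\<Omega> - K' \<subseteq> \<Omega> - K" and meas: "\<Omega> - K' \<in> sets lebesgue"
    using assms by (auto simp: open_Diff)
  show ?thesis
    unfolding admissible_def
    using L2loc_on_subset[OF _ sub] weak_grad_subset[OF _ sub] L2v_on_subset[OF _ meas sub]
      bc_qe_mono[OF _ assms(3)]
    by blast
qed

lemma dirichlet_antimono:
  assumes "open \<Omega>" "closed K'" "K \<subseteq> K'"
  shows "dirichlet \<Omega> N g K' \<le> dirichlet \<Omega> N g K"
  unfolding dirichlet_def
proof (rule INF_greatest)
  fix vG assume vG: "vG \<in> admissible \<Omega> N g K"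
  then have int: "set_integrable lebesgue (\<Omega> - K) (\<lambda>x. (norm (snd vG x))\<^sup>2)"
    unfolding admissible_def L2v_on_def by auto
  moreover have "set_integrable lebesgue (\<Omega> - K') (\<lambda>x. (norm (snd vG x))\<^sup>2)"
    by (rule set_integrable_subset[OF int]) (use assms in \<open>auto simp: open_Diff\<close>)
  ultimately have "(LINT x:(\<Omega> - K')|lebesgue. (norm (snd vG x))\<^sup>2)
      \<le> (LINT x:(\<Omega> - K)|lebesgue. (norm (snd vG x))\<^sup>2)"
    unfolding set_lebesgue_integral_def set_integrable_def using assms
    by (intro integral_mono) (auto split: split_indicator)
  moreover have "vG \<in> admissible \<Omega> N g K'"
    using admissible_mono[OF assms] vG by blast
  ultimately show "(INF vG\<in>admissible \<Omega> N g K'. ennreal (LINT x:(\<Omega> - K')|lebesgue. (norm (snd vG x))\<^sup>2))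
      \<le> ennreal (LINT x:(\<Omega> - K)|lebesgue. (norm (snd vG x))\<^sup>2)"
    by (intro INF_lower2[of vG] ennreal_leI)
qed

section \<open>Energy along growing cracks\<close>

lemma energy_cmult: "energy \<Omega> N (\<lambda>x. c * h x) K = ennreal (c\<^sup>2) * dirichlet \<Omega> N h K + H1 K"
  by (simp add: energy_eq_dirichlet_plus_H1 dirichlet_cmult)

lemma dirichlet_along_growing_cracks:
  fixes s t :: real
  assumes "open \<Omega>"
    and K: "\<And>\<sigma>. \<sigma> \<in> {s..t} \<Longrightarrow> K \<sigma> \<in> Kmf m \<Omega>"
    and grow: "\<And>\<sigma> \<tau>. s \<le> \<sigma> \<Longrightarrow> \<sigma> \<le> \<tau> \<Longrightarrow> \<tau> \<le> t \<Longrightarrow> K \<sigma> \<subseteq> K \<tau>"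
    and finite: "dirichlet \<Omega> N h (K s) \<noteq> top"
  shows "\<And>\<sigma>. \<sigma> \<in> {s..t} \<Longrightarrow> dirichlet \<Omega> N h (K \<sigma>) < top"
    and "antimono_on {s..t} (\<lambda>\<sigma>. enn2real (dirichlet \<Omega> N h (K \<sigma>)))"
proof -
  have antimono: "dirichlet \<Omega> N h (K \<tau>) \<le> dirichlet \<Omega> N h (K \<sigma>)"
    if "s \<le> \<sigma>" "\<sigma> \<le> \<tau>" "\<tau> \<le> t" for \<sigma> \<tau>
    using dirichlet_antimono[OF \<open>open \<Omega>\<close> _ grow[OF that]] K[of \<tau>] that
    unfolding Kmf_def by (auto intro: compact_imp_closed)
  show finite_D: "dirichlet \<Omega> N h (K \<sigma>) < top" if "\<sigma> \<in> {s..t}" for \<sigma>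
    using antimono[of s \<sigma>] finite that by (simp add: le_less_trans top.not_eq_extremum)
  show "antimono_on {s..t} (\<lambda>\<sigma>. enn2real (dirichlet \<Omega> N h (K \<sigma>)))"
    by (intro monotone_onI enn2real_mono antimono finite_D) auto
qed

lemma energy_separable_along_growing_cracks:
  fixes s t :: real
  assumes "open \<Omega>" "s \<le> t"
    and K: "\<And>\<sigma>. \<sigma> \<in> {s..t} \<Longrightarrow> K \<sigma> \<in> Kmf m \<Omega>"
    and grow: "\<And>\<sigma> \<tau>. s \<le> \<sigma> \<Longrightarrow> \<sigma> \<le> \<tau> \<Longrightarrow> \<tau> \<le> t \<Longrightarrow> K \<sigma> \<subseteq> K \<tau>"
    and w: "mono_on {s..t} w" "\<And>x. x \<in> {s..t} \<Longrightarrow> w x \<ge> 0"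
    and finite: "energy \<Omega> N (\<lambda>y. w t * h y) (K s) \<noteq> top"
  obtains D where "antimono_on {s..t} D" "\<And>\<sigma>. \<sigma> \<in> {s..t} \<Longrightarrow> D \<sigma> \<ge> 0"
    "\<And>x \<sigma>. x \<in> {s..t} \<Longrightarrow> \<sigma> \<in> {s..t} \<Longrightarrow>
      energy \<Omega> N (\<lambda>y. w x * h y) (K \<sigma>) = ennreal ((w x)\<^sup>2 * D \<sigma> + enn2real (H1 (K \<sigma>)))"
proof -
  have H1_finite: "H1 (K \<sigma>) < top" if "\<sigma> \<in> {s..t}" for \<sigma>
    using K[OF that] unfolding Kmf_def by auto
  show thesis
  proof (cases "w t = 0")
    case True
    \<comment> \<open>The weight vanishes on [s, t], so the Dirichlet part (possibly infinite) is irrelevant.\<close>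
    have "w x = 0" if "x \<in> {s..t}" for x
    proof -
      have "w x \<le> w t"
        by (rule mono_onD[OF w(1) that]) (use that \<open>s \<le> t\<close> in auto)
      then show ?thesis using w(2)[OF that] True by simp
    qed
    then have zero: "energy \<Omega> N (\<lambda>y. w x * h y) (K \<sigma>) = H1 (K \<sigma>)" if "x \<in> {s..t}" for x \<sigma>
      using energy_cmult[of \<Omega> N "w x" h "K \<sigma>"] that by simp
    show thesis
    proof (rule that[of "\<lambda>_. 0"])
      show "energy \<Omega> N (\<lambda>y. w x * h y) (K \<sigma>) = ennreal ((w x)\<^sup>2 * 0 + enn2real (H1 (K \<sigma>)))"
        if "x \<in> {s..t}" "\<sigma> \<in> {s..t}" for x \<sigma>
        using zero[OF that(1)] H1_finite[OF that(2)] by simp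
    qed (simp_all add: antimono_on_const)
  next
    case False
    then have "dirichlet \<Omega> N h (K s) \<noteq> top"
      using finite by (auto simp: energy_cmult ennreal_mult_eq_top_iff)
    then have D: "\<And>\<sigma>. \<sigma> \<in> {s..t} \<Longrightarrow> dirichlet \<Omega> N h (K \<sigma>) < top"
        "antimono_on {s..t} (\<lambda>\<sigma>. enn2real (dirichlet \<Omega> N h (K \<sigma>)))"
      using dirichlet_along_growing_cracks[of \<Omega> s t K m N h] \<open>open \<Omega>\<close> K grow by blast+
    show thesis
    proof (rule that[OF D(2)])
      show "energy \<Omega> N (\<lambda>y. w x * h y) (K \<sigma>)
          = ennreal ((w x)\<^sup>2 * enn2real (dirichlet \<Omega> N h (K \<sigma>)) + enn2real (H1 (K \<sigma>)))"
        if "x \<in> {s..t}" "\<sigma> \<in> {s..t}" for x \<sigma>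
        using D(1)[OF that(2)] H1_finite[OF that(2)] by (simp add: energy_cmult ennreal_mult)
    qed simp
  qed
qed

lemma mono_on_power2:
  fixes w :: "'a::order \<Rightarrow> real"
  assumes "mono_on S w" "\<And>x. x \<in> S \<Longrightarrow> w x \<ge> 0"
  shows "mono_on S (\<lambda>x. (w x)\<^sup>2)"
proof (rule monotone_onI)
  fix x y assume "x \<in> S" "y \<in> S" "x \<le> y"
  then show "(w x)\<^sup>2 \<le> (w y)\<^sup>2"
    using assms mono_onD[OF assms(1)] by (intro power_mono) auto
qed

lemma energy_le_at_earlier_crack:
  fixes s t :: real and w :: "real \<Rightarrow> real"
  assumes "open \<Omega>" "s \<le> t"
    and K: "\<And>\<sigma>. \<sigma> \<in> {s..t} \<Longrightarrow> K \<sigma> \<in> Kmf m \<Omega>"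
    and grow: "\<And>\<sigma> \<tau>. s \<le> \<sigma> \<Longrightarrow> \<sigma> \<le> \<tau> \<Longrightarrow> \<tau> \<le> t \<Longrightarrow> K \<sigma> \<subseteq> K \<tau>"
    and w: "mono_on {s..t} w" "\<And>x. x \<in> {s..t} \<Longrightarrow> w x \<ge> 0" "abs_cont_on s t w"
    and ac: "abs_cont_on s t (\<lambda>\<sigma>. enn2real (energy \<Omega> N (\<lambda>y. w \<sigma> * h y) (K \<sigma>)))"
    and Z: "Z \<in> null_sets lebesgue"
    and stationary: "\<And>x. x \<in> {s..t} - Z \<Longrightarrow>
      ((\<lambda>\<sigma>. enn2real (energy \<Omega> N (\<lambda>y. w x * h y) (K \<sigma>))) has_real_derivative 0) (at x within {s..t})"
  shows "energy \<Omega> N (\<lambda>y. w t * h y) (K t) \<le> energy \<Omega> N (\<lambda>y. w t * h y) (K s)"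
proof (cases "energy \<Omega> N (\<lambda>y. w t * h y) (K s) = top")
  case False
  define E where "E x \<sigma> = energy \<Omega> N (\<lambda>y. w x * h y) (K \<sigma>)" for x \<sigma>
  obtain D where D: "antimono_on {s..t} D" "\<And>\<sigma>. \<sigma> \<in> {s..t} \<Longrightarrow> D \<sigma> \<ge> 0"
    and E_eq: "\<And>x \<sigma>. x \<in> {s..t} \<Longrightarrow> \<sigma> \<in> {s..t} \<Longrightarrow>
      E x \<sigma> = ennreal ((w x)\<^sup>2 * D \<sigma> + enn2real (H1 (K \<sigma>)))"
    using energy_separable_along_growing_cracks[where K = K and w = w and N = N and h = h,
        OF assms(1,2) K grow w(1,2)] False
    unfolding E_def by blast
  have "enn2real (E t t) \<le> enn2real (E t s)"
  proof (rule separable_energy_stationary_le[where E = "\<lambda>x \<sigma>. enn2real (E x \<sigma>)"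
        and p = "\<lambda>x. (w x)\<^sup>2" and D = D and H = "\<lambda>\<sigma>. enn2real (H1 (K \<sigma>))" and N = Z])
    show "enn2real (E x \<sigma>) = (w x)\<^sup>2 * D \<sigma> + enn2real (H1 (K \<sigma>))"
      if "x \<in> {s..t}" "\<sigma> \<in> {s..t}" for x \<sigma>
    proof -
      have "0 \<le> (w x)\<^sup>2 * D \<sigma> + enn2real (H1 (K \<sigma>))"
        using D(2)[OF that(2)] by simp
      then show ?thesis
        using E_eq[OF that] by (simp del: ennreal_plus)
    qed
    show "mono_on {s..t} (\<lambda>x. (w x)\<^sup>2)"
      using mono_on_power2[OF w(1,2)] .
    have "\<bar>w x\<bar> \<le> w t" if "x \<in> {s..t}" for x
      using mono_onD[OF w(1) that] w(2)[OF that] that by auto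
    then show "abs_cont_on s t (\<lambda>x. (w x)\<^sup>2)"
      by (rule abs_cont_on_power2[OF w(3)])
  qed (use assms D(1) Z ac stationary in \<open>auto simp: E_def\<close>)
  moreover have "E t t < top" "E t s < top"
    using E_eq[of t t] E_eq[of t s] \<open>s \<le> t\<close> by simp_all
  ultimately show ?thesis
    using ennreal_leI[of "enn2real (E t t)" "enn2real (E t s)"] unfolding E_def by simp
qed simp

theorem proposition7p12:
  fixes \<Omega> N K0 :: "pt set" and K :: "real \<Rightarrow> pt set"
    and \<phi> :: "real \<Rightarrow> real" and h :: "pt \<Rightarrow> real" and m :: nat
  assumes "bounded \<Omega>" "connected \<Omega>" "open \<Omega>" "lipschitz_boundary \<Omega>"
    and "openin (top_of_set (frontier \<Omega>)) N" "finite (components N)"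
    and "m \<ge> 1"
    and "abs_cont_on 0 1 \<phi>" "mono_on {0..1} \<phi>" "\<forall>t\<in>{0..1}. \<phi> t \<ge> 0"
    and "h \<in> H1space \<Omega>"
    and "K0 \<in> Kmf m \<Omega>" "\<forall>t\<in>{0..1}. K t \<in> Kmf m \<Omega>"
    and a: "\<forall>s t. 0 \<le> s \<and> s \<le> t \<and> t \<le> 1 \<longrightarrow> K0 \<subseteq> K s \<and> K s \<subseteq> K t"
    and b: "\<forall>K'\<in>Kmf m \<Omega>. K0 \<subseteq> K' \<longrightarrow>
              energy \<Omega> N (\<lambda>x. \<phi> 0 * h x) (K 0) \<le> energy \<Omega> N (\<lambda>x. \<phi> 0 * h x) K'"
    and c: "\<forall>t\<in>{0..1}. \<forall>K'\<in>Kmf m \<Omega>. K t \<subseteq> K' \<longrightarrow>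
              energy \<Omega> N (\<lambda>x. \<phi> t * h x) (K t) \<le> energy \<Omega> N (\<lambda>x. \<phi> t * h x) K'"
    and d: "abs_cont_on 0 1 (\<lambda>t. enn2real (energy \<Omega> N (\<lambda>x. \<phi> t * h x) (K t)))"
    and e: "AE t in lebesgue. t \<in> {0..1} \<longrightarrow>
              ((\<lambda>s. enn2real (energy \<Omega> N (\<lambda>x. \<phi> t * h x) (K s))) has_real_derivative 0)
                (at t within {0..1})"
  shows "\<forall>s t. 0 \<le> s \<and> s < t \<and> t \<le> 1 \<longrightarrow>
           energy \<Omega> N (\<lambda>x. \<phi> t * h x) (K t) \<le> energy \<Omega> N (\<lambda>x. \<phi> t * h x) (K s)"
proof (intro allI impI)
  fix s t :: real assume "0 \<le> s \<and> s < t \<and> t \<le> 1"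
  then have st: "0 \<le> s" "s \<le> t" "t \<le> 1" and sub: "{s..t} \<subseteq> {0..1}" by auto
  obtain Z where "Z \<in> null_sets lebesgue" and stationary: "\<And>x. x \<in> space lebesgue - Z \<Longrightarrow> x \<in> {0..1} \<longrightarrow>
      ((\<lambda>\<sigma>. enn2real (energy \<Omega> N (\<lambda>y. \<phi> x * h y) (K \<sigma>))) has_real_derivative 0) (at x within {0..1})"
    using AE_E3[OF e] by blast
  show "energy \<Omega> N (\<lambda>x. \<phi> t * h x) (K t) \<le> energy \<Omega> N (\<lambda>x. \<phi> t * h x) (K s)"
  proof (rule energy_le_at_earlier_crack[OF assms(3) \<open>s \<le> t\<close>, where Z = Z])
    show "abs_cont_on s t \<phi>" "abs_cont_on s t (\<lambda>\<sigma>. enn2real (energy \<Omega> N (\<lambda>y. \<phi> \<sigma> * h y) (K \<sigma>)))"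
      using abs_cont_on_subinterval[OF assms(8)] abs_cont_on_subinterval[OF d] st by simp_all
    show "((\<lambda>\<sigma>. enn2real (energy \<Omega> N (\<lambda>y. \<phi> x * h y) (K \<sigma>))) has_real_derivative 0) (at x within {s..t})"
      if "x \<in> {s..t} - Z" for x
    proof -
      have "x \<in> space lebesgue - Z" "x \<in> {0..1}" using that sub by auto
      then show ?thesis using has_field_derivative_subset[OF _ sub] stationary by blast
    qed
  qed (use assms(9,10,13) a st sub \<open>Z \<in> null_sets lebesgue\<close> in \<open>auto intro: mono_on_subset\<close>)
qed

end
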